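(* Let $a$ be a real number. The inequality $S_{n,a}(x)>0$ holds for all integers $n\ge1$ and all real $x\in(0,\pi)$ if and only if $a\ge1$.
   Context: For a real number $a$ and integers $0\le m$, $\binom{m+a}{m}=\frac{(a+1)(a+2)\cdots(a+m)}{m!}$ (equal to $1$ when $m=0$). For an integer $n\ge1$, $S_{n,a}(x)=\sum_{j=1}^n\binom{n+a-j}{n-j}\sin(jx)$. *)

theory Defs
  imports Complex_Main
begin

text \<open>Generalized binomial coefficient binom(m+a, m) = (a+1)(a+2)...(a+m)/m!, equal to 1 for m = 0.\<close>
definition binom_shift :: "nat \<Rightarrow> real \<Rightarrow> real" where
  "binom_shift m a = (\<Prod>i=1..m. (a + real i)) / fact m"

definition S :: "nat \<Rightarrow> real \<Rightarrow> real \<Rightarrow> real" where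
  "S n a x = (\<Sum>j=1..n. binom_shift (n - j) a * sin (real j * x))"

end

theory Submission
  imports Defs "HOL-Computational_Algebra.Formal_Power_Series"
begin

text \<open>
  Writing the coefficients as \<open>binom(m+a, m) = (-1)^m binom(-a-1, m)\<close>, Vandermonde's identity
  becomes a convolution identity in the upper parameter, which gives
  \<open>S_{n,a} = \<Sum>_{k<n} binom(k+a-2, k) S_{n-k,1}\<close>. For \<open>a \<ge> 1\<close> all these coefficients are
  nonnegative and the one of \<open>S_{n,1}\<close> is 1, so it suffices that the Fejer-type kernel
  \<open>S_{n,1}\<close> is positive; this follows from the closed form
  \<open>(2 - 2 cos x) S_{n,1}(x) = (n+1) sin x - sin((n+1)x)\<close> and \<open>|sin(nx)| \<le> n |sin x|\<close>.
  Conversely \<open>S_{2,a}(x) = sin x (a + 1 + 2 cos x)\<close> is negative near \<open>\<pi>\<close> when \<open>a < 1\<close>.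
\<close>

lemma binom_shift_eq_pochhammer: "binom_shift m a = pochhammer (a + 1) m / fact m"
  unfolding binom_shift_def pochhammer_prod_rev
  by (rule arg_cong[where f="\<lambda>p. p / fact m"],
      rule prod.reindex_bij_witness[where i="\<lambda>i. m + 1 - i" and j="\<lambda>i. m + 1 - i"]) auto

lemma binom_shift_eq_gbinomial: "binom_shift m a = (-1) ^ m * ((- a - 1) gchoose m)"
  by (simp add: binom_shift_eq_pochhammer gbinomial_pochhammer add.commute)

lemma binom_shift_convolution:
  "binom_shift m a = (\<Sum>k\<le>m. binom_shift k (a - b - 1) * binom_shift (m - k) b)"
proof -
  have "(\<Sum>k\<le>m. binom_shift k (a - b - 1) * binom_shift (m - k) b)
      = (-1) ^ m * (\<Sum>k=0..m. ((b - a) gchoose k) * ((- b - 1) gchoose (m - k)))"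
    unfolding binom_shift_eq_gbinomial atLeast0AtMost sum_distrib_left
    by (intro sum.cong refl) (auto simp: power_add[symmetric])
  also have "\<dots> = binom_shift m a"
    by (simp add: gbinomial_Vandermonde binom_shift_eq_gbinomial)
  finally show ?thesis ..
qed

lemma binom_shift_zero: "binom_shift m 0 = 1"
  by (simp add: binom_shift_eq_pochhammer pochhammer_fact[symmetric])

lemma binom_shift_nonneg: "a \<ge> -1 \<Longrightarrow> binom_shift m a \<ge> 0"
  unfolding binom_shift_def by (intro divide_nonneg_pos prod_nonneg) auto

lemma S_convolution:
  "S n a x = (\<Sum>k<n. binom_shift k (a - b - 1) * S (n - k) b x)"
proof -
  define g where "g j k = binom_shift k (a - b - 1) * binom_shift (n - j - k) b * sin (real j * x)"
    for j k
  have "S n a x = (\<Sum>j=1..n. \<Sum>k\<le>n - j. g j k)"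
    unfolding S_def g_def binom_shift_convolution[of "n - _" a b]
    by (simp add: sum_distrib_right)
  also have "\<dots> = (\<Sum>j\<in>{1..n}. \<Sum>k\<in>{k. k \<in> {..<n} \<and> j + k \<le> n}. g j k)"
    by (intro sum.cong refl) (auto intro: sum.cong)
  also have "\<dots> = (\<Sum>k\<in>{..<n}. \<Sum>j\<in>{j. j \<in> {1..n} \<and> j + k \<le> n}. g j k)"
    by (rule sum.swap_restrict) auto
  also have "\<dots> = (\<Sum>k<n. \<Sum>j=1..n - k. g j k)"
    by (intro sum.cong refl) (auto intro: sum.cong)
  also have "\<dots> = (\<Sum>k<n. binom_shift k (a - b - 1) * S (n - k) b x)"
    unfolding S_def g_def sum_distrib_left
    by (intro sum.cong refl) (simp add: algebra_simps diff_commute)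
  finally show ?thesis .
qed

lemma S_zero_closed_form:
  "(2 - 2 * cos x) * S m 0 x = sin x + sin (real m * x) - sin ((real m + 1) * x)"
proof (induction m)
  case 0
  then show ?case by (simp add: S_def)
next
  case (Suc m)
  have "S (Suc m) 0 x = S m 0 x + sin ((real m + 1) * x)"
    by (simp add: S_def binom_shift_zero add.commute)
  moreover have "sin ((real m + 1 + 1) * x) = sin ((real m + 1) * x) * cos x + cos ((real m + 1) * x) * sin x"
    "sin (real m * x) = sin ((real m + 1) * x) * cos x - cos ((real m + 1) * x) * sin x"
    using sin_add[of "(real m + 1) * x" x] sin_diff[of "(real m + 1) * x" x]
    by (simp_all add: algebra_simps)
  ultimately show ?case
    using Suc by (simp add: algebra_simps)
qed

lemma S_one_closed_form:
  "(2 - 2 * cos x) * S m 1 x = (real m + 1) * sin x - sin ((real m + 1) * x)"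
proof (induction m)
  case 0
  then show ?case by (simp add: S_def)
next
  case (Suc m)
  have "S (Suc m) 1 x = S (Suc m) 0 x + S m 1 x"
    using S_convolution[of "Suc m" 1 x 0] S_convolution[of m 1 x 0]
    by (simp add: binom_shift_zero sum.lessThan_Suc_shift del: sum.lessThan_Suc)
  then show ?case
    using Suc S_zero_closed_form[of x "Suc m"] by (simp add: algebra_simps)
qed

lemma abs_sin_mult_le: "\<bar>sin (real n * x)\<bar> \<le> real n * \<bar>sin x\<bar>"
proof (induction n)
  case 0
  then show ?case by simp
next
  case (Suc n)
  have "sin (real (Suc n) * x) = sin (real n * x) * cos x + cos (real n * x) * sin x"
    using sin_add[of "real n * x" x] by (simp add: algebra_simps)
  then have "\<bar>sin (real (Suc n) * x)\<bar> \<le> \<bar>sin (real n * x)\<bar> * \<bar>cos x\<bar> + \<bar>cos (real n * x)\<bar> * \<bar>sin x\<bar>"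
    by (metis abs_mult abs_triangle_ineq)
  also have "\<dots> \<le> real n * \<bar>sin x\<bar> * 1 + 1 * \<bar>sin x\<bar>"
    by (intro add_mono mult_mono) (use Suc in auto)
  finally show ?case by (simp add: algebra_simps)
qed

lemma abs_cos_less_one:
  assumes "0 < x" "x < pi"
  shows "\<bar>cos x\<bar> < 1"
proof -
  have "cos x ^ 2 < 1"
    using sin_gt_zero[OF assms] sin_cos_squared_add[of x] by (smt (verit) zero_less_power)
  then show ?thesis
    by (simp add: abs_square_less_1)
qed

lemma sin_Suc_mult_less:
  assumes "n \<ge> 1" "0 < x" "x < pi"
  shows "sin ((real n + 1) * x) < (real n + 1) * sin x"
proof -
  have sin_pos: "sin x > 0"
    using assms sin_gt_zero by auto
  have "\<bar>cos x\<bar> < 1"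
    using abs_cos_less_one assms(2,3) .
  have "sin ((real n + 1) * x) = sin (real n * x) * cos x + cos (real n * x) * sin x"
    using sin_add[of "real n * x" x] by (simp add: algebra_simps)
  also have "\<dots> \<le> \<bar>sin (real n * x)\<bar> * \<bar>cos x\<bar> + \<bar>cos (real n * x)\<bar> * sin x"
    using sin_pos by (intro add_mono) (auto simp: abs_mult[symmetric] abs_ge_self)
  also have "\<dots> \<le> real n * sin x * \<bar>cos x\<bar> + sin x"
    using sin_pos abs_sin_mult_le[of n x] by (intro add_mono mult_mono) auto
  also have "\<dots> < real n * sin x + sin x"
    using sin_pos \<open>\<bar>cos x\<bar> < 1\<close> assms(1) by (simp add: mult_strict_left_mono)
  finally show ?thesis by (simp add: algebra_simps)
qed

lemma S_one_pos:
  assumes "m \<ge> 1" "0 < x" "x < pi"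
  shows "S m 1 x > 0"
proof -
  have "cos x < 1"
    using abs_cos_less_one[OF assms(2,3)] by linarith
  then have "(2 - 2 * cos x) * S m 1 x > 0"
    using S_one_closed_form[of x m] sin_Suc_mult_less[OF assms] by simp
  with \<open>cos x < 1\<close> show ?thesis
    by (simp add: zero_less_mult_iff)
qed

lemma S_pos:
  assumes "a \<ge> 1" "n \<ge> 1" "0 < x" "x < pi"
  shows "S n a x > 0"
proof -
  have "(\<Sum>k<n. binom_shift k (a - 2) * S (n - k) 1 x) > 0"
  proof (rule sum_pos2)
    show "0 \<in> {..<n}" using assms by auto
    show "0 < binom_shift 0 (a - 2) * S (n - 0) 1 x"
      using S_one_pos assms by (simp add: binom_shift_def)
    show "0 \<le> binom_shift k (a - 2) * S (n - k) 1 x" if "k \<in> {..<n}" for k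
    proof -
      have "S (n - k) 1 x > 0"
        using that assms S_one_pos[of "n - k" x] by simp
      then show ?thesis
        using assms binom_shift_nonneg[of "a - 2" k] by simp
    qed
  qed simp
  then show ?thesis
    using S_convolution[of n a x 1] by simp
qed

lemma S_two: "S 2 a x = sin x * (a + 1 + 2 * cos x)"
  using sin_double[of x] by (simp add: S_def numeral_2_eq_2 binom_shift_def algebra_simps)

lemma S_two_neg:
  assumes "a < 1"
  obtains x where "0 < x" "x < pi" "S 2 a x < 0"
proof -
  define t where "t = min (1 - a) 1 / 4 - 1"
  have t: "-1 < t" "t < 1" "a + 1 + 2 * t < 0"
    using assms unfolding t_def by (auto simp: min_def field_simps)
  define x where "x = arccos t"
  have x: "0 < x" "x < pi" "cos x = t"
    using arccos_lt_bounded[of t] t unfolding x_def by auto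
  then have "sin x > 0"
    using sin_gt_zero by blast
  then have "S 2 a x < 0"
    using mult_pos_neg[OF \<open>sin x > 0\<close> t(3)] x(3) by (simp add: S_two)
  with x show ?thesis using that by blast
qed

theorem theorem3p4:
  fixes a :: real
  shows "(\<forall>n::nat. \<forall>x::real. n \<ge> 1 \<longrightarrow> 0 < x \<longrightarrow> x < pi \<longrightarrow> S n a x > 0) \<longleftrightarrow> a \<ge> 1"
proof
  assume pos: "\<forall>n::nat. \<forall>x::real. n \<ge> 1 \<longrightarrow> 0 < x \<longrightarrow> x < pi \<longrightarrow> S n a x > 0"
  show "a \<ge> 1"
  proof (rule ccontr)
    assume "\<not> a \<ge> 1"
    then obtain x where "0 < x" "x < pi" "S 2 a x < 0"
      using S_two_neg not_le by blast
    moreover have "S 2 a x > 0"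
      using pos \<open>0 < x\<close> \<open>x < pi\<close> by auto
    ultimately show False
      by linarith
  qed
next
  assume "a \<ge> 1"
  then show "\<forall>n::nat. \<forall>x::real. n \<ge> 1 \<longrightarrow> 0 < x \<longrightarrow> x < pi \<longrightarrow> S n a x > 0"
    using S_pos by blast
qed

end
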